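(* Assume $f$ satisfies conditions (A0)–(A3) below. Then there exists a constant $C>0$ such that every $2\pi$-periodic solution $x$ of the system $\ddot x(t)=f(t,x(t),\mathbf x_t,\dot x(t))$ satisfies $|x(t)|<C$, $|\dot x(t)|<C$ and $|\ddot x(t)|<C$ for all $t\in\mathbb R$.
   Context: Let $n,m\ge 1$ be integers, $\mathbf V=\mathbb R^n$ with Euclidean inner product $x\bullet z$ and norm $|x|$. For $\mathbf y=(y^1,\dots,y^m)\in\mathbf V^m$ put $|\mathbf y|:=\max_{1\le j\le m}|y^j|$. Fix reals $0=\tau_0<\tau_1<\dots<\tau_m<2\pi$ with $\tau_{m-j+1}=2\pi-\tau_j$ for $j=1,\dots,m$. Let $f:\mathbb R\times\mathbf V\times\mathbf V^m\times\mathbf V\to\mathbf V$, and for a function $x:\mathbb R\to\mathbf V$ put $\mathbf x_t:=(x(t-\tau_1),\dots,x(t-\tau_m))$. A $2\pi$-periodic solution is a $C^2$ function $x:\mathbb R\to\mathbf V$ with $x(t+2\pi)=x(t)$ and $\ddot x(t)=f(t,x(t),\mathbf x_t,\dot x(t))$ for all $t$. Conditions: (A0) $f$ is continuous and $f(t+2\pi,x,\mathbf y,z)=f(t,x,\mathbf y,z)$ for all arguments. (A1) There is $R>0$ such that for all $t\in\mathbb R$, $x,z\in\mathbf V$, $\mathbf y\in\mathbf V^m$: if $|x|\ge R$, $|\mathbf y|\le|x|$ and $x\bullet z=0$, then $x\bullet f(t,x,\mathbf y,z)>0$. (A2) There is a continuous $\phi:[0,\infty)\to(0,\infty)$ with $\int_0^\infty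 \frac{s\,ds}{\phi(s)}=\infty$ and $|f(t,x,\mathbf y,z)|\le\phi(|z|)$ for all $t$, all $|x|\le R$, $|\mathbf y|\le R$ and all $z$. (A3) There are constants $\alpha>0,K>0$ with $|f(t,x,\mathbf y,z)|\le\alpha\big(x\bullet f(t,x,\mathbf y,z)+|z|^2\big)+K$ for all $t$, all $|x|\le R$, $|\mathbf y|\le R$ and all $z$. *)

theory Defs
  imports "HOL-Analysis.Analysis"
begin

text \<open>Delay vectors y = (y^1,...,y^m) are modelled as functions nat => real^'n,
  only the values at indices 1..m being relevant.
  Max norm |y| = max over j in {1..m} of |y^j|.\<close>

definition ynorm :: "nat \<Rightarrow> (nat \<Rightarrow> real^'n) \<Rightarrow> real" where
  "ynorm m y = Max ((\<lambda>j. norm (y j)) ` {1..m})"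

definition delayed :: "nat \<Rightarrow> (nat \<Rightarrow> real) \<Rightarrow> (real \<Rightarrow> real^'n) \<Rightarrow> real \<Rightarrow> (nat \<Rightarrow> real^'n)" where
  "delayed m \<tau> x t = (\<lambda>j. if j \<in> {1..m} then x (t - \<tau> j) else 0)"

definition periodic_solution ::
  "nat \<Rightarrow> (nat \<Rightarrow> real) \<Rightarrow> (real \<Rightarrow> real^'n \<Rightarrow> (nat \<Rightarrow> real^'n) \<Rightarrow> real^'n \<Rightarrow> real^'n)
    \<Rightarrow> (real \<Rightarrow> real^'n) \<Rightarrow> (real \<Rightarrow> real^'n) \<Rightarrow> (real \<Rightarrow> real^'n) \<Rightarrow> bool" where
  "periodic_solution m \<tau> f x x' x'' \<longleftrightarrow>
     (\<forall>t. (x has_vector_derivative x' t) (at t)) \<and>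
     (\<forall>t. (x' has_vector_derivative x'' t) (at t)) \<and>
     continuous_on UNIV x'' \<and>
     (\<forall>t. x (t + 2 * pi) = x t) \<and>
     (\<forall>t. x'' t = f t (x t) (delayed m \<tau> x t) (x' t))"

end

theory Submission
  imports Defs "HOL-Library.Periodic_Fun"
begin

text \<open>At a maximum point t0 of |x| the function |x|^2 has vanishing first derivative
  2 x\<bullet>x' and nonpositive second derivative 2 (x\<bullet>x'' + |x'|^2); since also |x_t0| \<le> |x(t0)|,
  condition (A1) rules out |x(t0)| \<ge> R, so |x| < R everywhere. Over a period,
  \<integral> (x\<bullet>x'' + |x'|^2) = \<integral> (x\<bullet>x')' = 0, so (A3) gives \<integral> |x''| \<le> 2\<pi>K, and as x' has mean zero
  over a period this bounds |x'| by 2\<pi>K. Finally (A2) bounds |x''| by the maximum of \<phi> on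
  [0, 2\<pi>K].\<close>

lemma has_real_derivative_inner:
  fixes f g :: "real \<Rightarrow> 'a::real_inner"
  assumes "(f has_vector_derivative f') (at t within S)" "(g has_vector_derivative g') (at t within S)"
  shows "((\<lambda>s. f s \<bullet> g s) has_real_derivative (f t \<bullet> g' + f' \<bullet> g t)) (at t within S)"
proof -
  have "((\<lambda>s. f s \<bullet> g s) has_derivative (\<lambda>h. f t \<bullet> (h *\<^sub>R g') + (h *\<^sub>R f') \<bullet> g t)) (at t within S)"
    using has_derivative_inner[OF assms[unfolded has_vector_derivative_def]] .
  moreover have "(\<lambda>h. f t \<bullet> (h *\<^sub>R g') + (h *\<^sub>R f') \<bullet> g t) = (*) (f t \<bullet> g' + f' \<bullet> g t)"
    by (auto simp: algebra_simps)
  ultimately show ?thesis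
    by (simp add: has_field_derivative_def)
qed

lemma continuous_periodic_attains_sup:
  fixes g :: "real \<Rightarrow> real"
  assumes cont: "continuous_on UNIV g" and per: "\<And>t. g (t + p) = g t" and "p > 0"
  obtains t0 where "\<And>t. g t \<le> g t0"
proof -
  obtain t0 where sup: "\<forall>s\<in>{0..p}. g s \<le> g t0"
    using continuous_attains_sup[of "{0..p}" g] continuous_on_subset[OF cont subset_UNIV] \<open>p > 0\<close>
    by auto
  interpret periodic_fun_simple g p
    by standard (rule per)
  have "g t \<le> g t0" for t
  proof -
    define k where "k = \<lfloor>t / p\<rfloor>"
    have "t - of_int k * p \<in> {0..p}"
      using floor_divide_lower[OF \<open>p > 0\<close>, of t] floor_divide_upper[OF \<open>p > 0\<close>, of t]
      unfolding k_def by (auto simp: algebra_simps)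
    then have "g (t - of_int k * p) \<le> g t0"
      using sup by blast
    then show ?thesis
      using minus_of_int[of t k] by simp
  qed
  then show thesis
    using that by blast
qed

lemma periodic_derivative:
  fixes x :: "real \<Rightarrow> 'a::real_normed_vector"
  assumes deriv: "\<And>t. (x has_vector_derivative x' t) (at t)" and per: "\<And>t. x (t + p) = x t"
  shows "x' (t + p) = x' t"
proof -
  have "((x \<circ> (\<lambda>s. s + p)) has_vector_derivative (1 *\<^sub>R x' (t + p))) (at t)"
    by (intro vector_diff_chain_at deriv derivative_eq_intros) auto
  moreover have "x \<circ> (\<lambda>s. s + p) = x"
    using per by (auto simp: fun_eq_iff)
  ultimately have "(x has_vector_derivative x' (t + p)) (at t)"
    by simp
  then show ?thesis
    using vector_derivative_unique_at[OF _ deriv] by blast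
qed

lemma DERIV_global_max_second_derivative:
  fixes r :: "real \<Rightarrow> real"
  assumes deriv: "\<And>t. (r has_real_derivative r' t) (at t)"
    and deriv2: "(r' has_real_derivative c) (at t0)"
    and max: "\<And>t. r t \<le> r t0"
  shows "r' t0 = 0" and "c \<le> 0"
proof -
  show "r' t0 = 0"
    by (rule DERIV_local_max[OF deriv zero_less_one]) (use max in auto)
  show "c \<le> 0"
  proof (rule ccontr)
    assume "\<not> c \<le> 0"
    then obtain d where "d > 0" and inc: "\<And>h. 0 < h \<Longrightarrow> h < d \<Longrightarrow> r' t0 < r' (t0 + h)"
      using DERIV_pos_inc_right[OF deriv2] by auto
    obtain z where z: "t0 < z" "z < t0 + d" and mvt: "r (t0 + d) - r t0 = d * r' z"
      using MVT2[of t0 "t0 + d" r r'] deriv \<open>d > 0\<close> by auto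
    have "r' z > 0"
      using inc[of "z - t0"] z \<open>r' t0 = 0\<close> by auto
    then have "d * r' z > 0"
      using \<open>d > 0\<close> by simp
    then have "r (t0 + d) > r t0"
      using mvt by linarith
    then show False
      using max[of "t0 + d"] by simp
  qed
qed

lemma inner_derivatives_at_norm_max:
  fixes x :: "real \<Rightarrow> 'a::real_inner"
  assumes d1: "\<And>t. (x has_vector_derivative x' t) (at t)"
    and d2: "\<And>t. (x' has_vector_derivative x'' t) (at t)"
    and max: "\<And>t. norm (x t) \<le> norm (x t0)"
  shows "x t0 \<bullet> x' t0 = 0" and "x t0 \<bullet> x'' t0 + (norm (x' t0))\<^sup>2 \<le> 0"
proof -
  have r1: "((\<lambda>s. x s \<bullet> x s) has_real_derivative (2 * (x s \<bullet> x' s))) (at s)" for s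
    using has_real_derivative_inner[OF d1 d1, of s] by (simp add: inner_commute)
  have r2: "((\<lambda>s. 2 * (x s \<bullet> x' s)) has_real_derivative
      (2 * (x t0 \<bullet> x'' t0 + (norm (x' t0))\<^sup>2))) (at t0)"
    using DERIV_cmult[OF has_real_derivative_inner[OF d1 d2], of 2]
    by (simp add: power2_norm_eq_inner inner_commute add.commute)
  have "x s \<bullet> x s \<le> x t0 \<bullet> x t0" for s
    using max[of s] unfolding norm_le .
  note crit = DERIV_global_max_second_derivative[OF r1 r2 this]
  show "x t0 \<bullet> x' t0 = 0" "x t0 \<bullet> x'' t0 + (norm (x' t0))\<^sup>2 \<le> 0"
    using crit by simp_all
qed

lemma periodic_derivative_has_integral_zero:
  fixes x :: "real \<Rightarrow> 'a::banach"
  assumes "\<And>t. (x has_vector_derivative x' t) (at t)" and "\<And>t. x (t + p) = x t" and "p \<ge> 0"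
  shows "(x' has_integral 0) {a..a + p}"
  using fundamental_theorem_of_calculus[of a "a + p" x x'] assms
  by (auto intro: has_vector_derivative_at_within)

lemma norm_le_integral_norm_derivative_of_mean_zero:
  fixes y :: "real \<Rightarrow> 'a::banach"
  assumes deriv: "\<And>t. t \<in> {a..b} \<Longrightarrow> (y has_vector_derivative y' t) (at t within {a..b})"
    and cont: "continuous_on {a..b} y'"
    and mean_zero: "(y has_integral 0) {a..b}" and "a < b"
  shows "norm (y a) \<le> integral {a..b} (\<lambda>t. norm (y' t))"
proof -
  define V where "V = integral {a..b} (\<lambda>t. norm (y' t))"
  have int: "y' integrable_on {a..s}" "(\<lambda>t. norm (y' t)) integrable_on {a..s}"
    if "s \<le> b" for s
    using that by (auto intro!: integrable_continuous_real continuous_intros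
        intro: continuous_on_subset[OF cont])
  have dist_le: "norm (y a - y s) \<le> V" if s: "s \<in> {a..b}" for s
  proof -
    have "(y' has_integral (y s - y a)) {a..s}"
      using s by (intro fundamental_theorem_of_calculus)
        (auto intro: has_vector_derivative_within_subset[OF deriv])
    then have "norm (y a - y s) = norm (integral {a..s} y')"
      by (simp add: integral_unique norm_minus_commute)
    also have "\<dots> \<le> integral {a..s} (\<lambda>t. norm (y' t))"
      using s int by (intro integral_norm_bound_integral) auto
    also have "\<dots> \<le> V"
      unfolding V_def using s int by (intro integral_subset_le) auto
    finally show ?thesis .
  qed
  have mean_deviation: "((\<lambda>s. y a - y s) has_integral ((b - a) *\<^sub>R y a)) (cbox a b)"
    using has_integral_diff[OF has_integral_const_real[of "y a" a b] mean_zero] \<open>a < b\<close> by simp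
  have "norm ((b - a) *\<^sub>R y a) \<le> V * measure lborel (cbox a b)"
    by (rule has_integral_bound[OF _ mean_deviation]) (use dist_le[of a] dist_le \<open>a < b\<close> in auto)
  then show ?thesis
    using \<open>a < b\<close> unfolding V_def by simp
qed

lemma norm_derivative_le_of_second_derivative_bound:
  fixes x :: "real \<Rightarrow> 'a::{real_inner,banach}"
  assumes d1: "\<And>t. (x has_vector_derivative x' t) (at t)"
    and d2: "\<And>t. (x' has_vector_derivative x'' t) (at t)"
    and cont: "continuous_on UNIV x''"
    and per: "\<And>t. x (t + p) = x t" and "p > 0"
    and bound: "\<And>t. norm (x'' t) \<le> \<alpha> * (x t \<bullet> x'' t + (norm (x' t))\<^sup>2) + K"
  shows "norm (x' a) \<le> p * K"
proof -
  define q where "q t = x t \<bullet> x'' t + (norm (x' t))\<^sup>2" for t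
  have q_deriv: "((\<lambda>t. x t \<bullet> x' t) has_vector_derivative q t) (at t)" for t
    using has_real_derivative_inner[OF d1 d2, of t]
    by (simp add: q_def has_real_derivative_iff_has_vector_derivative power2_norm_eq_inner)
  have "x (t + p) \<bullet> x' (t + p) = x t \<bullet> x' t" for t
    using per periodic_derivative[OF d1 per] by simp
  then have "(q has_integral 0) {a..a + p}"
    using periodic_derivative_has_integral_zero[OF q_deriv] \<open>p > 0\<close> by simp
  then have bound_int: "((\<lambda>t. \<alpha> * q t + K) has_integral p * K) {a..a + p}"
    using has_integral_add[OF has_integral_mult_right has_integral_const_real, of q 0 a "a + p" \<alpha> K]
      \<open>p > 0\<close> by simp
  have "(x' has_integral 0) {a..a + p}"
    using periodic_derivative_has_integral_zero[OF d1 per] \<open>p > 0\<close> by simp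
  then have "norm (x' a) \<le> integral {a..a + p} (\<lambda>t. norm (x'' t))"
    using d2 \<open>p > 0\<close> continuous_on_subset[OF cont subset_UNIV]
    by (intro norm_le_integral_norm_derivative_of_mean_zero)
      (auto intro: has_vector_derivative_at_within)
  also have "\<dots> \<le> p * K"
  proof (rule has_integral_le[OF integrable_integral bound_int])
    show "(\<lambda>t. norm (x'' t)) integrable_on {a..a + p}"
      by (intro integrable_continuous_real continuous_intros continuous_on_subset[OF cont]) simp
  qed (use bound q_def in auto)
  finally show ?thesis .
qed

lemma ynorm_delayed_le:
  assumes "m \<ge> 1" and "\<And>s. norm (x s) \<le> c"
  shows "ynorm m (delayed m \<tau> x t) \<le> c"
  unfolding ynorm_def delayed_def using assms
  by (subst Max_le_iff) auto

lemma periodic_solution_norm_less: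
  assumes sol: "periodic_solution m \<tau> f x x' x''" and "m \<ge> 1"
    and A1: "\<And>t x y z. norm x \<ge> R \<Longrightarrow> ynorm m y \<le> norm x \<Longrightarrow> x \<bullet> z = 0
               \<Longrightarrow> x \<bullet> f t x y z > 0"
  shows "norm (x t) < R"
proof -
  have d1: "\<And>t. (x has_vector_derivative x' t) (at t)"
    and d2: "\<And>t. (x' has_vector_derivative x'' t) (at t)"
    and per: "\<And>t. x (t + 2 * pi) = x t"
    and eq: "\<And>t. x'' t = f t (x t) (delayed m \<tau> x t) (x' t)"
    using sol unfolding periodic_solution_def by auto
  have "continuous_on UNIV (\<lambda>t. norm (x t))"
    using d1 by (intro continuous_intros continuous_at_imp_continuous_on)
      (blast intro: has_vector_derivative_continuous)
  then obtain t0 where max: "\<And>t. norm (x t) \<le> norm (x t0)"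
    by (rule continuous_periodic_attains_sup[of _ "2 * pi"]) (auto simp: per)
  note crit = inner_derivatives_at_norm_max[OF d1 d2 max]
  have "norm (x t0) < R"
  proof (rule ccontr)
    assume "\<not> norm (x t0) < R"
    then have "x t0 \<bullet> x'' t0 > 0"
      using A1[OF _ ynorm_delayed_le[OF \<open>m \<ge> 1\<close> max] crit(1)] eq by simp
    then show False
      using crit(2) zero_le_power2[of "norm (x' t0)"] by linarith
  qed
  then show ?thesis
    using max[of t] by simp
qed

theorem theorem3p1:
  fixes m :: nat and \<tau> :: "nat \<Rightarrow> real" and R :: real and \<phi> :: "real \<Rightarrow> real"
    and \<alpha> K :: real
    and f :: "real \<Rightarrow> real^'n \<Rightarrow> (nat \<Rightarrow> real^'n) \<Rightarrow> real^'n \<Rightarrow> real^'n"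
  assumes m_pos: "m \<ge> 1"
    and tau0: "\<tau> 0 = 0"
    and tau_mono: "\<And>j. j < m \<Longrightarrow> \<tau> j < \<tau> (Suc j)"
    and tau_lt: "\<tau> m < 2 * pi"
    and tau_sym: "\<And>j. j \<in> {1..m} \<Longrightarrow> \<tau> (m - j + 1) = 2 * pi - \<tau> j"
    and A0_cont: "continuous_on UNIV (\<lambda>(t, x, y, z). f t x y z)"
    and A0_per: "\<And>t x y z. f (t + 2 * pi) x y z = f t x y z"
    and R_pos: "R > 0"
    and A1: "\<And>t x y z. norm x \<ge> R \<Longrightarrow> ynorm m y \<le> norm x \<Longrightarrow> x \<bullet> z = 0
               \<Longrightarrow> x \<bullet> f t x y z > 0"
    and phi_cont: "continuous_on {0..} \<phi>"
    and phi_pos: "\<And>s. s \<ge> 0 \<Longrightarrow> \<phi> s > 0"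
    and phi_int: "filterlim (\<lambda>b. integral {0..b} (\<lambda>s. s / \<phi> s)) at_top at_top"
    and A2: "\<And>t x y z. norm x \<le> R \<Longrightarrow> ynorm m y \<le> R \<Longrightarrow> norm (f t x y z) \<le> \<phi> (norm z)"
    and alpha_pos: "\<alpha> > 0" and K_pos: "K > 0"
    and A3: "\<And>t x y z. norm x \<le> R \<Longrightarrow> ynorm m y \<le> R \<Longrightarrow>
               norm (f t x y z) \<le> \<alpha> * (x \<bullet> f t x y z + (norm z)\<^sup>2) + K"
  shows "\<exists>C>0. \<forall>x x' x''. periodic_solution m \<tau> f x x' x'' \<longrightarrow>
            (\<forall>t. norm (x t) < C \<and> norm (x' t) < C \<and> norm (x'' t) < C)"
proof -
  define B where "B = 2 * pi * K"
  obtain s0 where "s0 \<in> {0..B}" and phi_le: "\<And>s. s \<in> {0..B} \<Longrightarrow> \<phi> s \<le> \<phi> s0"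
    using continuous_attains_sup[of "{0..B}" \<phi>] continuous_on_subset[OF phi_cont] K_pos
    unfolding B_def by auto
  then have "\<phi> s0 > 0" and "B > 0"
    using phi_pos K_pos unfolding B_def by auto
  show ?thesis
  proof (intro exI[of _ "R + B + \<phi> s0"] conjI allI impI)
    show "R + B + \<phi> s0 > 0"
      using R_pos \<open>B > 0\<close> \<open>\<phi> s0 > 0\<close> by simp
    fix x x' x'' t
    assume sol: "periodic_solution m \<tau> f x x' x''"
    then have d1: "\<And>t. (x has_vector_derivative x' t) (at t)"
      and d2: "\<And>t. (x' has_vector_derivative x'' t) (at t)"
      and cont: "continuous_on UNIV x''"
      and per: "\<And>t. x (t + 2 * pi) = x t"
      and eq: "\<And>t. x'' t = f t (x t) (delayed m \<tau> x t) (x' t)"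
      unfolding periodic_solution_def by auto
    have x_less: "norm (x s) < R" for s
      using periodic_solution_norm_less[OF sol m_pos A1] .
    have y_le: "ynorm m (delayed m \<tau> x s) \<le> R" for s
      by (rule ynorm_delayed_le[OF m_pos less_imp_le[OF x_less]])
    have "norm (x' t) \<le> B"
      unfolding B_def using A3[OF less_imp_le[OF x_less] y_le] eq
      by (intro norm_derivative_le_of_second_derivative_bound[OF d1 d2 cont per]) auto
    moreover have "norm (x'' t) \<le> \<phi> (norm (x' t))"
      using A2[OF less_imp_le[OF x_less] y_le] eq by simp
    then have "norm (x'' t) \<le> \<phi> s0"
      using phi_le[of "norm (x' t)"] \<open>norm (x' t) \<le> B\<close> by simp
    ultimately show "norm (x t) < R + B + \<phi> s0" "norm (x' t) < R + B + \<phi> s0"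
      "norm (x'' t) < R + B + \<phi> s0"
      using x_less[of t] \<open>B > 0\<close> \<open>\<phi> s0 > 0\<close> R_pos by auto
  qed
qed

end
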